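(* Let $\mathbf{k}$ be a commutative unital ring, $R$ a $\mathbf{k}$-algebra, $\lambda,\kappa\in\mathbf{k}$, and $P$ an extended Rota-Baxter operator of weight $(\lambda,\kappa)$ on $R$. Let $\tilde P:=-\lambda\,\mathrm{id}_R-P$. (1) For all $u,v\in R$, $$P(u)\tilde P(v)=P(u\tilde P(v))+\tilde P(P(u)v)-\kappa uv,\qquad \tilde P(u)P(v)=\tilde P(uP(v))+P(\tilde P(u)v)-\kappa uv.$$ (2) For all $a,b\in\mathbf{k}$, the operator $Q:=aP+b\tilde P$ is an extended Rota-Baxter operator of weight $\big(\lambda(a+b),\ ab\lambda^2+(a-b)^2\kappa\big)$.
   Context: For $\lambda,\kappa\in\mathbf{k}$, an extended Rota-Baxter operator of weight $(\lambda,\kappa)$ on a $\mathbf{k}$-algebra $R$ is a $\mathbf{k}$-linear map $P:R\to R$ such that $P(x)P(y)=P(xP(y))+P(P(x)y)+\lambda P(xy)+\kappa xy$ for all $x,y\in R$. *)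

theory Defs
  imports Main
begin

definition k_algebra :: "('k::comm_ring_1 \<Rightarrow> 'r::ring \<Rightarrow> 'r) \<Rightarrow> bool" where
  "k_algebra sm \<longleftrightarrow>
     (\<forall>a x y. sm a (x + y) = sm a x + sm a y) \<and>
     (\<forall>a b x. sm (a + b) x = sm a x + sm b x) \<and>
     (\<forall>a b x. sm (a * b) x = sm a (sm b x)) \<and>
     (\<forall>x. sm 1 x = x) \<and>
     (\<forall>a x y. sm a (x * y) = sm a x * y) \<and>
     (\<forall>a x y. sm a (x * y) = x * sm a y)"

definition k_linear :: "('k::comm_ring_1 \<Rightarrow> 'r::ring \<Rightarrow> 'r) \<Rightarrow> ('r \<Rightarrow> 'r) \<Rightarrow> bool" where
  "k_linear sm P \<longleftrightarrow> (\<forall>x y. P (x + y) = P x + P y) \<and> (\<forall>a x. P (sm a x) = sm a (P x))"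

definition ext_RB :: "('k::comm_ring_1 \<Rightarrow> 'r::ring \<Rightarrow> 'r) \<Rightarrow> 'k \<Rightarrow> 'k \<Rightarrow> ('r \<Rightarrow> 'r) \<Rightarrow> bool" where
  "ext_RB sm lam kap P \<longleftrightarrow> k_linear sm P \<and>
     (\<forall>x y. P x * P y = P (x * P y) + P (P x * y) + sm lam (P (x * y)) + sm kap (x * y))"

definition rb_tilde :: "('k::comm_ring_1 \<Rightarrow> 'r::ring \<Rightarrow> 'r) \<Rightarrow> 'k \<Rightarrow> ('r \<Rightarrow> 'r) \<Rightarrow> 'r \<Rightarrow> 'r" where
  "rb_tilde sm lam P x = - sm lam x - P x"

end

theory Submission
  imports Defs HOL.Modules
begin

text \<open>Identity (1) is the Rota-Baxter identity of \<open>P\<close> rearranged after substituting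
\<open>P~ = -\<lambda> id - P\<close>. For (2), \<open>aP + bP~ = (a - b)P - b\<lambda> id\<close>, and for all \<open>c, d\<close> the operator
\<open>Q = cP - d id\<close> is again an extended Rota-Baxter operator: its defect
\<open>Q(x)Q(y) - Q(xQ(y)) - Q(Q(x)y) - (c\<lambda> + 2d)Q(xy)\<close> equals \<open>c\<^sup>2\<close> times the defect of \<open>P\<close>
plus \<open>(cd\<lambda> + d\<^sup>2)xy\<close>, so \<open>Q\<close> has weight \<open>(c\<lambda> + 2d, c\<^sup>2\<kappa> + cd\<lambda> + d\<^sup>2)\<close>.
Taking \<open>c = a - b\<close> and \<open>d = b\<lambda>\<close> gives the stated weight.\<close>

locale k_algebra_scale =
  fixes sm :: "'k::comm_ring_1 \<Rightarrow> 'r::ring \<Rightarrow> 'r"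
  assumes k_algebra: "k_algebra sm"
begin

sublocale module sm
  using k_algebra by unfold_locales (simp_all add: k_algebra_def)

lemma mult_scale_left [simp]: "sm a x * y = sm a (x * y)"
  using k_algebra by (simp add: k_algebra_def)

lemma mult_scale_right [simp]: "x * sm a y = sm a (x * y)"
  using k_algebra by (simp add: k_algebra_def)

lemma k_linear_iff_module_hom: "k_linear sm P \<longleftrightarrow> module_hom sm sm P"
  by (simp add: k_linear_def module_hom_iff module_axioms)

lemma ext_RB_module_hom: "ext_RB sm lam kap P \<Longrightarrow> module_hom sm sm P"
  by (simp add: ext_RB_def k_linear_iff_module_hom)

lemma ext_RB_mixed_left:
  assumes "ext_RB sm lam kap P"
  shows "P u * rb_tilde sm lam P v
       = P (u * rb_tilde sm lam P v) + rb_tilde sm lam P (P u * v) - sm kap (u * v)"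
proof -
  interpret P: module_hom sm sm P
    using assms by (rule ext_RB_module_hom)
  show ?thesis
    using assms by (simp add: ext_RB_def rb_tilde_def algebra_simps P.add P.diff P.neg P.scale)
qed

lemma ext_RB_mixed_right:
  assumes "ext_RB sm lam kap P"
  shows "rb_tilde sm lam P u * P v
       = rb_tilde sm lam P (u * P v) + P (rb_tilde sm lam P u * v) - sm kap (u * v)"
proof -
  interpret P: module_hom sm sm P
    using assms by (rule ext_RB_module_hom)
  show ?thesis
    using assms by (simp add: ext_RB_def rb_tilde_def algebra_simps P.add P.diff P.neg P.scale)
qed

lemma ext_RB_affine:
  assumes "ext_RB sm lam kap P"
  shows "ext_RB sm (c * lam + 2 * d) (c\<^sup>2 * kap + c * d * lam + d\<^sup>2) (\<lambda>x. sm c (P x) - sm d x)"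
proof -
  interpret P: module_hom sm sm P
    using assms by (rule ext_RB_module_hom)
  have RB: "P x * P y = P (x * P y) + P (P x * y) + sm lam (P (x * y)) + sm kap (x * y)" for x y
    using assms by (simp add: ext_RB_def)
  define Q where "Q = (\<lambda>x. sm c (P x) - sm d x)"
  have "module_hom sm sm Q"
    unfolding Q_def
    by (simp add: module_hom_iff module_axioms algebra_simps P.add P.scale scale_left_commute)
  moreover have "Q x * Q y = Q (x * Q y) + Q (Q x * y) + sm (c * lam + 2 * d) (Q (x * y))
          + sm (c\<^sup>2 * kap + c * d * lam + d\<^sup>2) (x * y)" for x y
  proof -
    have "Q x * Q y - (Q (x * Q y) + Q (Q x * y))
        = sm (c * c) (P x * P y - P (x * P y) - P (P x * y)) + sm (2 * c * d) (P (x * y))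
          - sm (d * d) (x * y)"
      unfolding Q_def
      by (simp add: algebra_simps P.add P.diff P.scale mult.commute)
        (simp add: scale_left_distrib [symmetric] mult_ac)
    also have "\<dots> = sm (c * c * lam + 2 * c * d) (P (x * y)) + sm (c * c * kap - d * d) (x * y)"
      by (simp add: RB algebra_simps)
    also have "\<dots> = sm (c * lam + 2 * d) (Q (x * y)) + sm (c\<^sup>2 * kap + c * d * lam + d\<^sup>2) (x * y)"
      by (simp add: Q_def algebra_simps power2_eq_square)
        (simp add: scale_left_distrib [symmetric] mult_ac)
    finally show ?thesis
      by (simp add: algebra_simps)
  qed
  ultimately show ?thesis
    by (simp add: ext_RB_def k_linear_iff_module_hom Q_def)
qed

lemma scale_add_scale_rb_tilde:
  "sm a (P x) + sm b (rb_tilde sm lam P x) = sm (a - b) (P x) - sm (b * lam) x"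
  by (simp add: rb_tilde_def algebra_simps mult.commute)

lemma ext_RB_combination:
  assumes "ext_RB sm lam kap P"
  shows "ext_RB sm (lam * (a + b)) (a * b * lam ^ 2 + (a - b) ^ 2 * kap)
           (\<lambda>x. sm a (P x) + sm b (rb_tilde sm lam P x))"
proof -
  have "(a - b) * lam + 2 * (b * lam) = lam * (a + b)"
    and "(a - b)\<^sup>2 * kap + (a - b) * (b * lam) * lam + (b * lam)\<^sup>2
         = a * b * lam ^ 2 + (a - b) ^ 2 * kap"
    by (simp_all add: algebra_simps power2_eq_square)
  then show ?thesis
    using ext_RB_affine[OF assms, of "a - b" "b * lam"] by (simp only: scale_add_scale_rb_tilde)
qed

end

theorem corollary2p5:
  fixes sm :: "'k::comm_ring_1 \<Rightarrow> 'r::ring \<Rightarrow> 'r"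
    and lam kap :: 'k and P :: "'r \<Rightarrow> 'r"
  assumes "k_algebra sm"
    and "ext_RB sm lam kap P"
  shows "(\<forall>u v. P u * rb_tilde sm lam P v
            = P (u * rb_tilde sm lam P v) + rb_tilde sm lam P (P u * v) - sm kap (u * v))
       \<and> (\<forall>u v. rb_tilde sm lam P u * P v
            = rb_tilde sm lam P (u * P v) + P (rb_tilde sm lam P u * v) - sm kap (u * v))
       \<and> (\<forall>a b. ext_RB sm (lam * (a + b)) (a * b * lam ^ 2 + (a - b) ^ 2 * kap)
                 (\<lambda>x. sm a (P x) + sm b (rb_tilde sm lam P x)))"
proof -
  interpret k_algebra_scale sm
    using assms(1) by (rule k_algebra_scale.intro)
  show ?thesis
    using ext_RB_mixed_left[OF assms(2)] ext_RB_mixed_right[OF assms(2)]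
      ext_RB_combination[OF assms(2)]
    by blast
qed

end
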